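(* Let $\mathbb{X}$ be a reflexive Kadets-Klee real Banach space and $\mathbb{Y}$ any real Banach space (both of dimension greater than $1$). Then the pair $(\mathbb{X},\mathbb{Y})$ has sBPBp for compact operators.
   Context: $S_{\mathbb{X}}$ is the unit sphere. $\mathbb{X}$ is Kadets-Klee if $x_n\to x$ weakly and $\|x_n\|\to\|x\|$ imply $\|x_n-x\|\to0$. The pair $(\mathbb{X},\mathbb{Y})$ has sBPBp for compact operators if for every $\epsilon>0$ and every compact linear operator $T:\mathbb{X}\to\mathbb{Y}$ with $\|T\|=1$ there exists $\eta(\epsilon,T)>0$ such that whenever $x_0\in S_{\mathbb{X}}$ satisfies $\|Tx_0\|>1-\eta(\epsilon,T)$, there exists $x_1\in S_{\mathbb{X}}$ with $\|Tx_1\|=1$ and $\|x_1-x_0\|<\epsilon$. *)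

theory Defs
  imports "HOL-Analysis.Analysis"
begin

definition weakly_tendsto :: "(nat \<Rightarrow> 'a::real_normed_vector) \<Rightarrow> 'a \<Rightarrow> bool" where
  "weakly_tendsto xs x \<longleftrightarrow> (\<forall>f :: 'a \<Rightarrow>\<^sub>L real. (\<lambda>n. blinfun_apply f (xs n)) \<longlonglongrightarrow> blinfun_apply f x)"

definition reflexive_space :: "'a::real_normed_vector itself \<Rightarrow> bool" where
  "reflexive_space _ \<longleftrightarrow>
     (\<forall>\<phi> :: ('a \<Rightarrow>\<^sub>L real) \<Rightarrow>\<^sub>L real. \<exists>x::'a. \<forall>f :: 'a \<Rightarrow>\<^sub>L real. blinfun_apply \<phi> f = blinfun_apply f x)"

definition kadets_klee :: "'a::real_normed_vector itself \<Rightarrow> bool" where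
  "kadets_klee _ \<longleftrightarrow>
     (\<forall>(xs :: nat \<Rightarrow> 'a) x. weakly_tendsto xs x \<and> (\<lambda>n. norm (xs n)) \<longlonglongrightarrow> norm x
        \<longrightarrow> (\<lambda>n. norm (xs n - x)) \<longlonglongrightarrow> 0)"

definition dim_gt_one :: "'a::real_vector itself \<Rightarrow> bool" where
  "dim_gt_one _ \<longleftrightarrow> (\<exists>u v :: 'a. u \<noteq> v \<and> independent {u, v})"

definition compact_operator :: "('a::real_normed_vector \<Rightarrow>\<^sub>L 'b::real_normed_vector) \<Rightarrow> bool" where
  "compact_operator T \<longleftrightarrow> compact (closure (blinfun_apply T ` cball 0 1))"

definition sBPBp_compact :: "'a::real_normed_vector itself \<Rightarrow> 'b::real_normed_vector itself \<Rightarrow> bool" where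
  "sBPBp_compact _ _ \<longleftrightarrow>
     (\<forall>\<epsilon>>0. \<forall>T :: 'a \<Rightarrow>\<^sub>L 'b. compact_operator T \<and> norm T = 1 \<longrightarrow>
        (\<exists>\<eta>>0. \<forall>x0. norm x0 = 1 \<and> norm (blinfun_apply T x0) > 1 - \<eta> \<longrightarrow>
           (\<exists>x1. norm x1 = 1 \<and> norm (blinfun_apply T x1) = 1 \<and> norm (x1 - x0) < \<epsilon>)))"

end

theory Submission
  imports Defs
begin

text \<open>If the property failed for some \<open>\<epsilon>\<close> and some compact \<open>T\<close> of norm one, there would be
  unit vectors \<open>x\<^sub>n\<close> with \<open>\<parallel>T x\<^sub>n\<parallel> \<rightarrow> 1\<close> staying \<open>\<epsilon>\<close>-far from every norm-attaining unit
  vector. In a reflexive space the unit ball is weakly sequentially compact (shown here from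
  Hahn-Banach, Tychonoff and a separability argument), so a subsequence converges weakly to some
  \<open>x\<close>. The compact operator turns this into norm convergence \<open>T x\<^sub>n \<rightarrow> T x\<close>, whence
  \<open>\<parallel>T x\<parallel> = 1\<close> and therefore \<open>\<parallel>x\<parallel> = 1\<close>; now the Kadets-Klee property upgrades the weak
  convergence \<open>x\<^sub>n \<rightharpoonup> x\<close> to norm convergence, contradicting the choice of the \<open>x\<^sub>n\<close>.\<close>

section \<open>The Hahn-Banach theorem\<close>

text \<open>Graphs of functionals of norm at most one on subspaces; running Zorn's lemma on such
  graphs avoids partial functions in the proof of the Hahn-Banach theorem.\<close>
definition dominated_subspace :: "('a::real_normed_vector \<times> real) set \<Rightarrow> bool" where
  "dominated_subspace G \<longleftrightarrow> subspace G \<and> (\<forall>p\<in>G. \<bar>snd p\<bar> \<le> norm (fst p))"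

lemma subspace_Union_chain:
  assumes "C \<noteq> {}" and "\<And>S. S \<in> C \<Longrightarrow> subspace S" and "chain\<^sub>\<subseteq> C"
  shows "subspace (\<Union>C)"
  unfolding subspace_def
proof (intro conjI ballI allI)
  show "0 \<in> \<Union>C" using assms(1,2) subspace_0 by blast
next
  fix x y assume "x \<in> \<Union>C" "y \<in> \<Union>C"
  then obtain X Y where XY: "X \<in> C" "Y \<in> C" "x \<in> X" "y \<in> Y" by auto
  then have "X \<subseteq> Y \<or> Y \<subseteq> X" using assms(3) by (auto simp: chain_subset_def)
  then show "x + y \<in> \<Union>C" using XY assms(2) by (metis UnionI subsetD subspace_add)
next
  fix c x assume "x \<in> \<Union>C"
  then show "c *\<^sub>R x \<in> \<Union>C" using assms(2) by (meson UnionE UnionI subspace_scale)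
qed

lemma dominated_subspace_functional:
  assumes "dominated_subspace G" "(x, a) \<in> G" "(x, b) \<in> G"
  shows "a = b"
proof -
  have "(x, a) - (x, b) \<in> G" using assms unfolding dominated_subspace_def by (blast intro: subspace_diff)
  then have "\<bar>snd ((x, a) - (x, b))\<bar> \<le> norm (fst ((x, a) - (x, b)))"
    using assms(1) unfolding dominated_subspace_def by blast
  then show ?thesis by simp
qed

lemma dominated_extension_bound_scaled:
  fixes M :: "('a::real_normed_vector \<times> real) set"
  assumes M: "dominated_subspace M"
    and below: "\<And>p. p \<in> M \<Longrightarrow> snd p - norm (fst p - z) \<le> c"
    and above: "\<And>p. p \<in> M \<Longrightarrow> c \<le> norm (fst p + z) - snd p"
    and p: "p \<in> M"
  shows "snd p + t * c \<le> norm (fst p + t *\<^sub>R z)"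
proof -
  consider "t = 0" | "t > 0" | "t < 0" by linarith
  then show ?thesis
  proof cases
    case 1
    then show ?thesis using M p
      by (auto simp: dominated_subspace_def intro: order_trans[OF abs_ge_self])
  next
    case 2
    have "(1/t) *\<^sub>R p \<in> M" using M p by (simp add: dominated_subspace_def subspace_scale)
    then have "t * c \<le> t * (norm ((1/t) *\<^sub>R fst p + z) - (1/t) * snd p)"
      using above 2 by (intro mult_left_mono) fastforce+
    also have "\<dots> = t * norm ((1/t) *\<^sub>R fst p + z) - snd p"
      using 2 by (simp add: field_simps)
    also have "t * norm ((1/t) *\<^sub>R fst p + z) = norm (t *\<^sub>R ((1/t) *\<^sub>R fst p + z))"
      using 2 by simp
    also have "t *\<^sub>R ((1/t) *\<^sub>R fst p + z) = fst p + t *\<^sub>R z"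
      using 2 by (simp add: algebra_simps)
    finally show ?thesis by simp
  next
    case 3
    define u where "u = - t"
    have u: "u > 0" using 3 by (simp add: u_def)
    have "(1/u) *\<^sub>R p \<in> M" using M p by (simp add: dominated_subspace_def subspace_scale)
    then have "u * ((1/u) * snd p - norm ((1/u) *\<^sub>R fst p - z)) \<le> u * c"
      using below u by (intro mult_left_mono) fastforce+
    moreover have "u * ((1/u) * snd p - norm ((1/u) *\<^sub>R fst p - z))
        = snd p - u * norm ((1/u) *\<^sub>R fst p - z)"
      using u by (simp add: field_simps)
    ultimately have "snd p - u * norm ((1/u) *\<^sub>R fst p - z) \<le> u * c" by simp
    also have "u * norm ((1/u) *\<^sub>R fst p - z) = norm (u *\<^sub>R ((1/u) *\<^sub>R fst p - z))"
      using u by simp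
    also have "u *\<^sub>R ((1/u) *\<^sub>R fst p - z) = fst p + t *\<^sub>R z"
      using u by (simp add: algebra_simps u_def)
    finally show ?thesis by (simp add: u_def)
  qed
qed

lemma dominated_subspace_extend:
  fixes M :: "('a::real_normed_vector \<times> real) set"
  assumes M: "dominated_subspace M"
  obtains c where "dominated_subspace {p + q | p q. p \<in> M \<and> q \<in> span {(z, c)}}"
proof -
  have M0: "0 \<in> M" and Msub: "subspace M"
    using M by (auto simp: dominated_subspace_def subspace_0)
  have key: "snd p - norm (fst p - z) \<le> norm (fst q + z) - snd q" if "p \<in> M" "q \<in> M" for p q
  proof -
    have "p + q \<in> M" using Msub that by (simp add: subspace_add)
    then have "snd p + snd q \<le> norm (fst p + fst q)"
      using M unfolding dominated_subspace_def by fastforce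
    also have "\<dots> \<le> norm (fst p - z) + norm (fst q + z)"
      using norm_triangle_ineq[of "fst p - z" "fst q + z"] by simp
    finally show ?thesis by simp
  qed
  \<comment> \<open>\<open>key\<close> leaves room for a value \<open>c\<close> at \<open>z\<close> between the sup and the inf below\<close>
  define c where "c = (SUP p\<in>M. snd p - norm (fst p - z))"
  have below: "snd p - norm (fst p - z) \<le> c" if "p \<in> M" for p
    unfolding c_def
    by (rule cSUP_upper[OF that], rule bdd_aboveI2[where M = "norm z"]) (use key[OF _ M0] in auto)
  have above: "c \<le> norm (fst q + z) - snd q" if "q \<in> M" for q
    unfolding c_def using M0 key that by (intro cSUP_least) auto
  have "\<bar>snd p + t * c\<bar> \<le> norm (fst p + t *\<^sub>R z)" if "p \<in> M" for p t
  proof -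
    have "- p \<in> M" using Msub that by (simp add: subspace_neg)
    then have "- snd p - t * c \<le> norm (- (fst p + t *\<^sub>R z))"
      using dominated_extension_bound_scaled[OF M below above, of "- p" "- t"] by simp
    moreover have "snd p + t * c \<le> norm (fst p + t *\<^sub>R z)"
      by (rule dominated_extension_bound_scaled[OF M below above that])
    ultimately show ?thesis by (auto simp only: norm_minus_cancel abs_le_iff)
  qed
  then have "dominated_subspace {p + q | p q. p \<in> M \<and> q \<in> span {(z, c)}}"
    unfolding dominated_subspace_def
    by (intro conjI subspace_sums[OF Msub subspace_span]) (auto simp: span_singleton)
  then show ?thesis by (rule that)
qed

lemma maximal_dominated_subspace_total:
  fixes M :: "('a::real_normed_vector \<times> real) set"
  assumes M: "dominated_subspace M"
    and maximal: "\<And>M'. dominated_subspace M' \<Longrightarrow> M \<subseteq> M' \<Longrightarrow> M' = M"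
  shows "\<exists>a. (z, a) \<in> M"
proof -
  obtain c where ext: "dominated_subspace {p + q | p q. p \<in> M \<and> q \<in> span {(z, c)}}"
    (is "dominated_subspace ?M'") using dominated_subspace_extend[OF M] .
  have "M \<subseteq> ?M'" by (metis (mono_tags, lifting) add.right_neutral mem_Collect_eq span_0 subsetI)
  then have "?M' = M" by (rule maximal[OF ext])
  moreover have "0 \<in> M" using M by (simp add: dominated_subspace_def subspace_0)
  then have "0 + (z, c) \<in> ?M'" using span_base[of "(z, c)" "{(z, c)}"] by blast
  ultimately have "(z, c) \<in> M" by simp
  then show ?thesis ..
qed

lemma dominated_subspace_total_blinfun:
  fixes M :: "('a::real_normed_vector \<times> real) set"
  assumes M: "dominated_subspace M" and total: "\<And>z. \<exists>a. (z, a) \<in> M"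
  obtains f :: "'a \<Rightarrow>\<^sub>L real"
    where "norm f \<le> 1" and "\<And>p. p \<in> M \<Longrightarrow> blinfun_apply f (fst p) = snd p"
proof -
  define g where "g z = (SOME a. (z, a) \<in> M)" for z
  have gM: "(z, g z) \<in> M" for z unfolding g_def using total by (rule someI_ex)
  have g: "g (fst p) = snd p" if "p \<in> M" for p
    using dominated_subspace_functional[OF M gM[of "fst p"], of "snd p"] that by simp
  have Msub: "subspace M" and dom: "\<And>p. p \<in> M \<Longrightarrow> \<bar>snd p\<bar> \<le> norm (fst p)"
    using M by (auto simp: dominated_subspace_def)
  have "bounded_linear g"
  proof (rule bounded_linear_intro[where K = 1])
    show "g (x + y) = g x + g y" for x y
      using g[OF subspace_add[OF Msub gM gM]] by simp
    show "g (r *\<^sub>R x) = r *\<^sub>R g x" for r x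
      using g[OF subspace_scale[OF Msub gM]] by simp
    show "norm (g x) \<le> norm x * 1" for x
      using dom[OF gM] by simp
  qed
  then have fg: "blinfun_apply (Blinfun g) = g" by (rule bounded_linear_Blinfun_apply)
  show ?thesis
  proof
    show "norm (Blinfun g) \<le> 1"
      by (rule norm_blinfun_bound) (use dom[OF gM] fg in auto)
    show "blinfun_apply (Blinfun g) (fst p) = snd p" if "p \<in> M" for p
      using g[OF that] fg by simp
  qed
qed

lemma hahn_banach_graph:
  fixes G :: "('a::real_normed_vector \<times> real) set"
  assumes "dominated_subspace G"
  obtains f :: "'a \<Rightarrow>\<^sub>L real"
    where "norm f \<le> 1" and "\<And>p. p \<in> G \<Longrightarrow> blinfun_apply f (fst p) = snd p"
proof -
  define A where "A = {M. dominated_subspace M \<and> G \<subseteq> M}"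
  have "\<exists>M\<in>A. \<forall>X\<in>A. M \<subseteq> X \<longrightarrow> X = M"
  proof (rule Zorn_Lemma2, intro ballI)
    fix C assume C: "C \<in> chains A"
    show "\<exists>U\<in>A. \<forall>X\<in>C. X \<subseteq> U"
    proof (cases "C = {}")
      case True
      then show ?thesis using assms unfolding A_def by blast
    next
      case False
      have "subspace (\<Union>C)"
        using C False by (intro subspace_Union_chain) (auto simp: chains_def A_def dominated_subspace_def)
      then have "\<Union>C \<in> A"
        using C False by (auto simp: chains_def A_def dominated_subspace_def)
      then show ?thesis by blast
    qed
  qed
  then obtain M where M: "dominated_subspace M" and GM: "G \<subseteq> M"
    and maximal: "\<And>M'. dominated_subspace M' \<Longrightarrow> M \<subseteq> M' \<Longrightarrow> M' = M"
    unfolding A_def by (metis (no_types, lifting) mem_Collect_eq order.trans)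
  show ?thesis
  proof (rule dominated_subspace_total_blinfun[OF M maximal_dominated_subspace_total[OF M maximal]])
    fix f :: "'a \<Rightarrow>\<^sub>L real"
    assume "norm f \<le> 1" and "\<And>p. p \<in> M \<Longrightarrow> blinfun_apply f (fst p) = snd p"
    then show thesis using GM by (intro that) auto
  qed
qed

lemma exists_norming_functional:
  fixes x :: "'a::real_normed_vector"
  obtains f :: "'a \<Rightarrow>\<^sub>L real" where "norm f \<le> 1" and "blinfun_apply f x = norm x"
proof -
  have "dominated_subspace (span {(x, norm x)})"
    unfolding dominated_subspace_def by (intro conjI subspace_span) (auto simp: span_singleton abs_mult)
  then obtain f :: "'a \<Rightarrow>\<^sub>L real"
    where "norm f \<le> 1" and "\<And>p. p \<in> span {(x, norm x)} \<Longrightarrow> blinfun_apply f (fst p) = snd p"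
    using hahn_banach_graph by blast
  moreover have "(x, norm x) \<in> span {(x, norm x)}" by (simp add: span_base)
  ultimately show ?thesis using that by fastforce
qed

lemma eq_0_if_blinfun_apply_eq_0:
  fixes v :: "'a::real_normed_vector"
  assumes "\<And>f::'a \<Rightarrow>\<^sub>L real. blinfun_apply f v = 0"
  shows "v = 0"
proof -
  obtain f :: "'a \<Rightarrow>\<^sub>L real" where "blinfun_apply f v = norm v"
    using exists_norming_functional by blast
  then show ?thesis using assms by simp
qed

lemma exists_functional_vanishing_on_closed_subspace:
  fixes Z :: "'a::real_normed_vector set"
  assumes "closed Z" and Z: "subspace Z" and "z \<notin> Z"
  shows "\<exists>f::'a \<Rightarrow>\<^sub>L real. (\<forall>w\<in>Z. blinfun_apply f w = 0) \<and> blinfun_apply f z \<noteq> 0"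
proof -
  define d where "d = infdist z Z"
  have "0 \<in> Z" using Z by (rule subspace_0)
  then have d: "d > 0" unfolding d_def using assms infdist_pos_not_in_closed by blast
  \<comment> \<open>the graph of \<open>w + t z \<mapsto> t d\<close> on \<open>Z \<oplus> span {z}\<close>, of norm at most one by the choice of \<open>d\<close>\<close>
  define G where "G = {p + q | p q. p \<in> Z \<times> {0} \<and> q \<in> span {(z, d)}}"
  have "subspace (Z \<times> {0::real})"
    using Z by (auto simp: subspace_def zero_prod_def)
  then have "subspace G" unfolding G_def by (rule subspace_sums[OF _ subspace_span])
  moreover have "\<bar>t * d\<bar> \<le> norm (w + t *\<^sub>R z)" if "w \<in> Z" for w t
  proof (cases "t = 0")
    case False
    have "- (1/t) *\<^sub>R w \<in> Z" using Z that by (simp add: subspace_scale subspace_neg)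
    then have "d \<le> norm (z + (1/t) *\<^sub>R w)" unfolding d_def using infdist_le by (fastforce simp: dist_norm)
    then have "\<bar>t\<bar> * d \<le> norm (t *\<^sub>R (z + (1/t) *\<^sub>R w))" by (simp add: mult_left_mono)
    also have "t *\<^sub>R (z + (1/t) *\<^sub>R w) = w + t *\<^sub>R z" using False by (simp add: algebra_simps)
    finally show ?thesis using d by (simp add: abs_mult)
  qed simp
  ultimately have "dominated_subspace G"
    unfolding dominated_subspace_def G_def by (auto simp: span_singleton)
  then obtain f :: "'a \<Rightarrow>\<^sub>L real"
    where f: "\<And>p. p \<in> G \<Longrightarrow> blinfun_apply f (fst p) = snd p"
    using hahn_banach_graph by blast
  have "blinfun_apply f w = 0" if "w \<in> Z" for w
  proof -
    have "(w, 0) + 0 \<in> G" unfolding G_def using that span_0[of "{(z, d)}"] by blast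
    then show ?thesis using f by fastforce
  qed
  moreover have "(0, 0) + (z, d) \<in> G"
    unfolding G_def using \<open>0 \<in> Z\<close> span_base[of "(z, d)" "{(z, d)}"] by blast
  then have "blinfun_apply f z \<noteq> 0" using f d by fastforce
  ultimately show ?thesis by blast
qed

section \<open>Weak sequential compactness of the unit ball\<close>

lemma eq_0_if_abs_le_scaled_epsilon:
  fixes a C :: real
  assumes "C \<ge> 0" and "\<And>\<delta>. \<delta> > 0 \<Longrightarrow> \<bar>a\<bar> \<le> C * \<delta>"
  shows "a = 0"
proof -
  have "\<bar>a\<bar> \<le> 0 + \<epsilon>" if "\<epsilon> > 0" for \<epsilon>
  proof -
    have "C * (\<epsilon> / (C + 1)) \<le> \<epsilon>" using assms(1) that by (simp add: field_simps)
    then show ?thesis using assms(2)[of "\<epsilon> / (C + 1)"] that assms(1) by simp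
  qed
  then have "\<bar>a\<bar> \<le> 0" by (rule field_le_epsilon)
  then show ?thesis by simp
qed

text \<open>Tychonoff in \<open>\<Prod>\<^sub>f [-\<parallel>f\<parallel>, \<parallel>f\<parallel>]\<close>; in a reflexive space the cluster point \<open>p\<close> is
  evaluation at an element.\<close>
lemma bounded_seq_has_pointwise_cluster_functional:
  fixes s :: "nat \<Rightarrow> 'a::real_normed_vector"
  assumes bounded: "\<And>n. norm (s n) \<le> 1"
  obtains p :: "('a \<Rightarrow>\<^sub>L real) \<Rightarrow> real"
  where "\<And>f. \<bar>p f\<bar> \<le> norm f"
    and "\<And>F \<delta>. finite F \<Longrightarrow> \<delta> > 0 \<Longrightarrow>
           \<exists>\<^sub>F n in sequentially. \<forall>f\<in>F. \<bar>blinfun_apply f (s n) - p f\<bar> < \<delta>"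
proof -
  define K where "K = Pi\<^sub>E UNIV (\<lambda>f::'a \<Rightarrow>\<^sub>L real. cball (0::real) (norm f))"
  have "compactin (product_topology (\<lambda>_. euclidean) UNIV) K"
    unfolding K_def compactin_PiE by auto
  then have "compact K" by (simp add: euclidean_product_topology)
  define \<phi> where "\<phi> n = (\<lambda>f::'a \<Rightarrow>\<^sub>L real. blinfun_apply f (s n))" for n
  have "\<bar>blinfun_apply f (s n)\<bar> \<le> norm f" for f :: "'a \<Rightarrow>\<^sub>L real" and n
    using norm_blinfun[of f "s n"] mult_left_mono[OF bounded[of n], of "norm f"] by simp
  then have "\<phi> n \<in> K" for n unfolding K_def \<phi>_def PiE_UNIV_domain by (auto simp: dist_real_def)
  then have "eventually (\<lambda>x. x \<in> K) (filtermap \<phi> sequentially)"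
    by (simp add: eventually_filtermap)
  then obtain p where pK: "p \<in> K" and p: "inf (nhds p) (filtermap \<phi> sequentially) \<noteq> bot"
    using \<open>compact K\<close> unfolding compact_filter by (metis filtermap_bot_iff trivial_limit_sequentially)
  show ?thesis
  proof
    show "\<bar>p f\<bar> \<le> norm f" for f
      using pK unfolding K_def PiE_UNIV_domain by (auto simp: dist_real_def)
  next
    fix F :: "('a \<Rightarrow>\<^sub>L real) set" and \<delta> :: real
    assume "finite F" "\<delta> > 0"
    define U where "U = {\<psi>. \<forall>f\<in>F. \<psi> (id f) \<in> ball (p f) \<delta>}"
    have "open U" unfolding U_def by (rule product_topology_basis') (use \<open>finite F\<close> in auto)
    moreover have "p \<in> U" unfolding U_def using \<open>\<delta> > 0\<close> by auto
    ultimately have "eventually (\<lambda>\<psi>. \<psi> \<in> U) (nhds p)" by (rule eventually_nhds_in_open)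
    have "\<exists>\<^sub>F \<psi> in filtermap \<phi> sequentially. \<psi> \<in> U"
    proof (rule ccontr)
      assume "\<not> ?thesis"
      then have "eventually (\<lambda>\<psi>. \<psi> \<notin> U) (filtermap \<phi> sequentially)"
        by (simp add: not_frequently)
      with \<open>eventually (\<lambda>\<psi>. \<psi> \<in> U) (nhds p)\<close>
      have "eventually (\<lambda>_. False) (inf (nhds p) (filtermap \<phi> sequentially))"
        unfolding eventually_inf by blast
      with p show False by (simp add: eventually_False)
    qed
    then show "\<exists>\<^sub>F n in sequentially. \<forall>f\<in>F. \<bar>blinfun_apply f (s n) - p f\<bar> < \<delta>"
      unfolding frequently_filtermap U_def \<phi>_def by (simp add: dist_real_def abs_minus_commute)
  qed
qed

lemma pointwise_cluster_functional_linear: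
  fixes s :: "nat \<Rightarrow> 'a::real_normed_vector" and p :: "('a \<Rightarrow>\<^sub>L real) \<Rightarrow> real"
  assumes cluster: "\<And>F \<delta>. finite F \<Longrightarrow> \<delta> > 0 \<Longrightarrow>
           \<exists>\<^sub>F n in sequentially. \<forall>f\<in>F. \<bar>blinfun_apply f (s n) - p f\<bar> < \<delta>"
  shows "linear p"
proof
  fix f g :: "'a \<Rightarrow>\<^sub>L real"
  have "\<bar>p (f + g) - p f - p g\<bar> \<le> 3 * \<delta>" if "\<delta> > 0" for \<delta>
  proof -
    have "\<exists>\<^sub>F n in sequentially. \<forall>h\<in>{f, g, f + g}. \<bar>blinfun_apply h (s n) - p h\<bar> < \<delta>"
      using that by (intro cluster) auto
    then obtain n where "\<forall>h\<in>{f, g, f + g}. \<bar>blinfun_apply h (s n) - p h\<bar> < \<delta>"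
      using frequently_ex by blast
    then show ?thesis by (auto simp: blinfun.add_left)
  qed
  then show "p (f + g) = p f + p g"
    using eq_0_if_abs_le_scaled_epsilon[of 3 "p (f + g) - p f - p g"] by simp
next
  fix c :: real and f :: "'a \<Rightarrow>\<^sub>L real"
  have "\<bar>p (c *\<^sub>R f) - c * p f\<bar> \<le> (1 + \<bar>c\<bar>) * \<delta>" if "\<delta> > 0" for \<delta>
  proof -
    have "\<exists>\<^sub>F n in sequentially. \<forall>h\<in>{f, c *\<^sub>R f}. \<bar>blinfun_apply h (s n) - p h\<bar> < \<delta>"
      using that by (intro cluster) auto
    then obtain n where "\<forall>h\<in>{f, c *\<^sub>R f}. \<bar>blinfun_apply h (s n) - p h\<bar> < \<delta>"
      using frequently_ex by blast
    then have "\<bar>c * blinfun_apply f (s n) - p (c *\<^sub>R f)\<bar> < \<delta>"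
      and "\<bar>c\<bar> * \<bar>blinfun_apply f (s n) - p f\<bar> \<le> \<bar>c\<bar> * \<delta>"
      by (auto simp: blinfun.scaleR_left intro: mult_left_mono)
    then show ?thesis by (simp add: algebra_simps abs_mult[symmetric])
  qed
  then show "p (c *\<^sub>R f) = c *\<^sub>R p f"
    using eq_0_if_abs_le_scaled_epsilon[of "1 + \<bar>c\<bar>" "p (c *\<^sub>R f) - c * p f"] by simp
qed

definition weak_cluster_point :: "(nat \<Rightarrow> 'a::real_normed_vector) \<Rightarrow> 'a \<Rightarrow> bool" where
  "weak_cluster_point s x \<longleftrightarrow> (\<forall>F::('a \<Rightarrow>\<^sub>L real) set. \<forall>\<delta>>0. finite F \<longrightarrow>
      (\<exists>\<^sub>F n in sequentially. \<forall>f\<in>F. \<bar>blinfun_apply f (s n) - blinfun_apply f x\<bar> < \<delta>))"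

lemma reflexive_bounded_seq_has_weak_cluster_point:
  fixes s :: "nat \<Rightarrow> 'a::real_normed_vector"
  assumes "reflexive_space TYPE('a)" and "\<And>n. norm (s n) \<le> 1"
  shows "\<exists>x. weak_cluster_point s x"
proof -
  obtain p where bound: "\<And>f. \<bar>p f\<bar> \<le> norm f"
    and cluster: "\<And>F \<delta>. finite F \<Longrightarrow> \<delta> > 0 \<Longrightarrow>
           \<exists>\<^sub>F n in sequentially. \<forall>f\<in>F. \<bar>blinfun_apply f (s n) - p f\<bar> < \<delta>"
    using bounded_seq_has_pointwise_cluster_functional assms(2) by blast
  have "bounded_linear p"
    using pointwise_cluster_functional_linear[OF cluster] bound
    by (intro bounded_linear_intro[where K = 1]) (auto simp: linear_iff)
  then have "blinfun_apply (Blinfun p) = p" by (rule bounded_linear_Blinfun_apply)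
  then obtain x where "\<And>f. p f = blinfun_apply f x"
    using assms(1) unfolding reflexive_space_def by metis
  then have "weak_cluster_point s x" unfolding weak_cluster_point_def using cluster by simp
  then show ?thesis ..
qed

lemma weak_cluster_pointD:
  fixes f :: "'a::real_normed_vector \<Rightarrow>\<^sub>L real"
  assumes "weak_cluster_point s w" and "\<delta> > 0"
  shows "\<exists>\<^sub>F n in sequentially. \<bar>blinfun_apply f (s n) - blinfun_apply f w\<bar> < \<delta>"
  using assms(1)[unfolded weak_cluster_point_def, rule_format, of \<delta> "{f}"] assms(2) by simp

lemma weak_cluster_point_in_closed_subspace:
  fixes Z :: "'a::real_normed_vector set"
  assumes "closed Z" "subspace Z" "\<And>n. s n \<in> Z" "weak_cluster_point s w"
  shows "w \<in> Z"
proof (rule ccontr)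
  assume "w \<notin> Z"
  then obtain f :: "'a \<Rightarrow>\<^sub>L real" where "\<forall>v\<in>Z. blinfun_apply f v = 0" and "blinfun_apply f w \<noteq> 0"
    using exists_functional_vanishing_on_closed_subspace assms(1,2) by blast
  moreover obtain n where "\<bar>blinfun_apply f (s n) - blinfun_apply f w\<bar> < \<bar>blinfun_apply f w\<bar>"
    using frequently_ex[OF weak_cluster_pointD[OF assms(4)]] \<open>blinfun_apply f w \<noteq> 0\<close> by fastforce
  ultimately show False using assms(3) by auto
qed

lemma weak_cluster_point_apply_eq_lim:
  fixes f :: "'a::real_normed_vector \<Rightarrow>\<^sub>L real"
  assumes "weak_cluster_point s w" and "(\<lambda>n. blinfun_apply f (s n)) \<longlonglongrightarrow> c"
  shows "blinfun_apply f w = c"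
proof -
  have "\<bar>blinfun_apply f w - c\<bar> \<le> 2 * \<delta>" if \<delta>: "\<delta> > 0" for \<delta>
  proof -
    have "\<forall>\<^sub>F n in sequentially. dist (blinfun_apply f (s n)) c < \<delta>"
      using assms(2) \<delta> by (rule tendstoD)
    then obtain n where "dist (blinfun_apply f (s n)) c < \<delta>"
      and "\<bar>blinfun_apply f (s n) - blinfun_apply f w\<bar> < \<delta>"
      using frequently_ex[OF frequently_eventually_conj[OF weak_cluster_pointD[OF assms(1) \<delta>]]]
      by auto
    then show ?thesis by (simp add: dist_real_def)
  qed
  then show ?thesis using eq_0_if_abs_le_scaled_epsilon[of 2 "blinfun_apply f w - c"] by simp
qed

definition rat_span :: "(nat \<Rightarrow> 'a::real_vector) \<Rightarrow> 'a set" where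
  "rat_span s = {\<Sum>i<n. of_rat (q i) *\<^sub>R s i | n q. True}"

lemma rat_spanI: "x = (\<Sum>i<n. of_rat (q i) *\<^sub>R s i) \<Longrightarrow> x \<in> rat_span s"
  unfolding rat_span_def by blast

lemma countable_rat_span: "countable (rat_span s)"
proof -
  have "rat_span s \<subseteq> (\<Union>n. (\<lambda>q. \<Sum>i<n. of_rat (q i) *\<^sub>R s i) ` (Pi\<^sub>E {..<n} (\<lambda>_. UNIV)))"
  proof
    fix y assume "y \<in> rat_span s"
    then obtain n q where y: "y = (\<Sum>i<n. of_rat (q i) *\<^sub>R s i)" unfolding rat_span_def by blast
    have "y = (\<Sum>i<n. of_rat (restrict q {..<n} i) *\<^sub>R s i)" unfolding y by (rule sum.cong) auto
    moreover have "restrict q {..<n} \<in> Pi\<^sub>E {..<n} (\<lambda>_. UNIV)" by auto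
    ultimately show "y \<in> (\<Union>n. (\<lambda>q. \<Sum>i<n. of_rat (q i) *\<^sub>R s i) ` (Pi\<^sub>E {..<n} (\<lambda>_. UNIV)))"
      by blast
  qed
  moreover have "countable (\<Union>n. (\<lambda>q. \<Sum>i<n. of_rat (q i) *\<^sub>R s i) ` (Pi\<^sub>E {..<n} (\<lambda>_. UNIV :: rat set)))"
    by (intro countable_UN countable_image countable_PiE) auto
  ultimately show ?thesis by (rule countable_subset)
qed

lemma rat_span_0: "0 \<in> rat_span s"
  by (rule rat_spanI[where n = 0]) simp

lemma rat_span_base: "s k \<in> rat_span s"
proof -
  have "s k = (\<Sum>i<Suc k. of_rat (if i = k then 1 else 0) *\<^sub>R s i)"
    by (simp add: if_distrib[of "\<lambda>q. of_rat q *\<^sub>R _"] sum.delta' cong: if_cong)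
  then show ?thesis by (rule rat_spanI)
qed

lemma rat_span_add:
  assumes "x \<in> rat_span s" and "y \<in> rat_span s"
  shows "x + y \<in> rat_span s"
proof -
  obtain n q m p where x: "x = (\<Sum>i<n. of_rat (q i) *\<^sub>R s i)" and y: "y = (\<Sum>i<m. of_rat (p i) *\<^sub>R s i)"
    using assms unfolding rat_span_def by blast
  have pad: "(\<Sum>i<k. of_rat (c i) *\<^sub>R s i) = (\<Sum>i<n + m. of_rat (if i < k then c i else 0) *\<^sub>R s i)"
    if "k \<le> n + m" for k c
    using that by (intro sum.mono_neutral_cong_left) auto
  have "x = (\<Sum>i<n + m. of_rat (if i < n then q i else 0) *\<^sub>R s i)"
    and "y = (\<Sum>i<n + m. of_rat (if i < m then p i else 0) *\<^sub>R s i)"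
    unfolding x y by (rule pad; simp)+
  then have "x + y = (\<Sum>i<n + m. of_rat ((if i < n then q i else 0) + (if i < m then p i else 0)) *\<^sub>R s i)"
    by (simp add: sum.distrib[symmetric] of_rat_add scaleR_add_left)
  then show ?thesis by (rule rat_spanI)
qed

lemma rat_span_scale:
  assumes "r \<in> \<rat>" and "x \<in> rat_span s"
  shows "r *\<^sub>R x \<in> rat_span s"
proof -
  obtain r' where r: "r = of_rat r'" using assms(1) by (rule Rats_cases)
  obtain n q where x: "x = (\<Sum>i<n. of_rat (q i) *\<^sub>R s i)" using assms(2) unfolding rat_span_def by blast
  have "r *\<^sub>R x = (\<Sum>i<n. of_rat (r' * q i) *\<^sub>R s i)"
    unfolding x r by (simp add: scaleR_sum_right of_rat_mult)
  then show ?thesis by (rule rat_spanI)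
qed

lemma subspace_closure_if_rat_closed:
  fixes D :: "'a::real_normed_vector set"
  assumes "0 \<in> D" and add: "\<And>x y. x \<in> D \<Longrightarrow> y \<in> D \<Longrightarrow> x + y \<in> D"
    and scale: "\<And>r x. r \<in> \<rat> \<Longrightarrow> x \<in> D \<Longrightarrow> r *\<^sub>R x \<in> D"
  shows "subspace (closure D)"
  unfolding subspace_def
proof (intro conjI ballI allI)
  show "0 \<in> closure D" using assms(1) closure_subset by blast
next
  fix x y assume "x \<in> closure D" "y \<in> closure D"
  then obtain a b where "\<forall>n. a n \<in> D" "a \<longlonglongrightarrow> x" "\<forall>n. b n \<in> D" "b \<longlonglongrightarrow> y"
    unfolding closure_sequential by blast
  then have "\<forall>n. a n + b n \<in> D" and "(\<lambda>n. a n + b n) \<longlonglongrightarrow> x + y"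
    using add by (auto intro: tendsto_add)
  then show "x + y \<in> closure D"
    unfolding closure_sequential by (intro exI[where x = "\<lambda>n. a n + b n"]) simp
next
  fix c :: real and x assume "x \<in> closure D"
  then obtain a where "\<forall>n. a n \<in> D" "a \<longlonglongrightarrow> x"
    unfolding closure_sequential by blast
  moreover have "c \<in> closure \<rat>" by (simp add: Rats_closure_real)
  then obtain q where "\<forall>n. q n \<in> \<rat>" "q \<longlonglongrightarrow> c"
    unfolding closure_sequential by blast
  ultimately have "\<forall>n. q n *\<^sub>R a n \<in> D" and "(\<lambda>n. q n *\<^sub>R a n) \<longlonglongrightarrow> c *\<^sub>R x"
    using scale by (auto intro: tendsto_scaleR)
  then show "c *\<^sub>R x \<in> closure D"
    unfolding closure_sequential by (intro exI[where x = "\<lambda>n. q n *\<^sub>R a n"]) simp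
qed

lemma subspace_closure_rat_span:
  fixes s :: "nat \<Rightarrow> 'a::real_normed_vector"
  shows "subspace (closure (rat_span s))"
  by (rule subspace_closure_if_rat_closed) (auto intro: rat_span_0 rat_span_add rat_span_scale)

lemma countable_dense_norming_sequence:
  fixes D :: "'a::real_normed_vector set"
  assumes "countable D"
  obtains \<phi> :: "nat \<Rightarrow> 'a \<Rightarrow>\<^sub>L real"
  where "\<And>j. norm (\<phi> j) \<le> 1"
    and "\<And>z. z \<in> closure D \<Longrightarrow> (\<And>j. blinfun_apply (\<phi> j) z = 0) \<Longrightarrow> z = 0"
proof -
  define d where "d = from_nat_into D"
  have "\<forall>j. \<exists>f::'a \<Rightarrow>\<^sub>L real. norm f \<le> 1 \<and> blinfun_apply f (d j) = norm (d j)"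
    using exists_norming_functional by blast
  then obtain \<phi> :: "nat \<Rightarrow> 'a \<Rightarrow>\<^sub>L real"
    where \<phi>1: "\<And>j. norm (\<phi> j) \<le> 1" and \<phi>d: "\<And>j. blinfun_apply (\<phi> j) (d j) = norm (d j)"
    by metis
  have "z = 0" if z: "z \<in> closure D" and z0: "\<And>j. blinfun_apply (\<phi> j) z = 0" for z
  proof -
    have "norm z \<le> 2 * \<delta>" if "\<delta> > 0" for \<delta>
    proof -
      obtain y where "y \<in> D" "dist y z < \<delta>" using z \<open>\<delta> > 0\<close> unfolding closure_approachable by blast
      moreover have "range d = D" unfolding d_def using \<open>y \<in> D\<close> assms by (intro range_from_nat_into) auto
      ultimately obtain j where dj: "dist (d j) z < \<delta>" by blast
      \<comment> \<open>\<open>\<phi> j\<close> norms \<open>d j\<close> but vanishes at the nearby point \<open>z\<close>\<close>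
      have "norm (d j) = blinfun_apply (\<phi> j) (d j - z)" using \<phi>d z0 by (simp add: blinfun.diff_right)
      also have "\<dots> \<le> norm (\<phi> j) * norm (d j - z)" using norm_blinfun[of "\<phi> j" "d j - z"] by simp
      also have "\<dots> \<le> norm (d j - z)" using mult_right_mono[OF \<phi>1[of j], of "norm (d j - z)"] by simp
      finally have "norm (d j) \<le> \<delta>" using dj by (simp add: dist_norm)
      then show ?thesis using dj norm_triangle_ineq4[of "d j" "d j - z"] by (simp add: dist_norm)
    qed
    then show "z = 0" using eq_0_if_abs_le_scaled_epsilon[of 2 "norm z"] by simp
  qed
  with \<phi>1 show ?thesis by (rule that)
qed

lemma bounded_seq_has_subseq_converging_on_functionals:
  fixes s :: "nat \<Rightarrow> 'a::real_normed_vector" and \<phi> :: "nat \<Rightarrow> 'a \<Rightarrow>\<^sub>L real"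
  assumes "\<And>n. norm (s n) \<le> 1" and "\<And>j. norm (\<phi> j) \<le> 1"
  shows "\<exists>r l. strict_mono r \<and> (\<forall>j. (\<lambda>k. blinfun_apply (\<phi> j) (s (r k))) \<longlonglongrightarrow> l j)"
proof -
  define a where "a n = (\<lambda>j. blinfun_apply (\<phi> j) (s n))" for n
  define C where "C = Pi\<^sub>E UNIV (\<lambda>_::nat. cball (0::real) 1)"
  have "compactin (product_topology (\<lambda>_. euclidean) UNIV) C"
    unfolding C_def compactin_PiE by auto
  then have "seq_compact C" by (simp add: euclidean_product_topology compact_imp_seq_compact)
  have "\<bar>blinfun_apply (\<phi> j) (s n)\<bar> \<le> 1" for j n
    using norm_blinfun[of "\<phi> j" "s n"] mult_mono[OF assms(2)[of j] assms(1)[of n]] by simp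
  then have "\<forall>n. a n \<in> C" unfolding C_def a_def PiE_UNIV_domain by (auto simp: dist_real_def)
  then obtain l r where r: "strict_mono r" and lim: "(a \<circ> r) \<longlonglongrightarrow> l"
    using seq_compactE[OF \<open>seq_compact C\<close>] by metis
  have "(\<lambda>k. blinfun_apply (\<phi> j) (s (r k))) \<longlonglongrightarrow> l j" for j
    using continuous_on_tendsto_compose[OF continuous_on_product_coordinates lim]
    by (simp add: a_def o_def)
  with r show ?thesis by blast
qed

lemma not_tendsto_imp_subseq_bounded_away:
  fixes X :: "nat \<Rightarrow> 'a::metric_space"
  assumes "\<not> X \<longlonglongrightarrow> L"
  shows "\<exists>\<delta>>0. \<exists>r::nat \<Rightarrow> nat. strict_mono r \<and> (\<forall>k. \<delta> \<le> dist (X (r k)) L)"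
proof -
  obtain \<delta> where "\<delta> > 0" and "\<exists>\<^sub>F n in sequentially. \<not> dist (X n) L < \<delta>"
    using assms unfolding tendsto_iff by (auto simp: not_eventually)
  then have inf: "infinite {n. \<delta> \<le> dist (X n) L}"
    by (simp add: frequently_cofinite[symmetric] cofinite_eq_sequentially not_less)
  then obtain r :: "nat \<Rightarrow> nat" where r: "strict_mono r" and "\<forall>k. r k \<in> {n. \<delta> \<le> dist (X n) L}"
    using infinite_enumerate[OF inf] by blast
  then show ?thesis using \<open>\<delta> > 0\<close> r by auto
qed

lemma weakly_tendsto_subseq:
  assumes "weakly_tendsto s x" and "strict_mono r"
  shows "weakly_tendsto (s \<circ> r) x"
  using assms LIMSEQ_subseq_LIMSEQ unfolding weakly_tendsto_def comp_def by fastforce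

lemma weakly_tendsto_if_subseq_weak_cluster_points_eq:
  fixes s :: "nat \<Rightarrow> 'a::real_normed_vector"
  assumes refl: "reflexive_space TYPE('a)" and bounded: "\<And>n. norm (s n) \<le> 1"
    and unique: "\<And>r w. strict_mono r \<Longrightarrow> weak_cluster_point (s \<circ> r) w \<Longrightarrow> w = x"
  shows "weakly_tendsto s x"
  unfolding weakly_tendsto_def
proof (rule allI, rule ccontr)
  fix f :: "'a \<Rightarrow>\<^sub>L real"
  assume "\<not> (\<lambda>n. blinfun_apply f (s n)) \<longlonglongrightarrow> blinfun_apply f x"
  then obtain \<delta> and r :: "nat \<Rightarrow> nat" where "\<delta> > 0" "strict_mono r"
    and far: "\<forall>k. \<delta> \<le> dist (blinfun_apply f (s (r k))) (blinfun_apply f x)"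
    using not_tendsto_imp_subseq_bounded_away by blast
  have "norm ((s \<circ> r) n) \<le> 1" for n using bounded by simp
  then obtain w where w: "weak_cluster_point (s \<circ> r) w"
    using reflexive_bounded_seq_has_weak_cluster_point[of "s \<circ> r", OF refl] by blast
  have "w = x" using unique[OF \<open>strict_mono r\<close> w] .
  then obtain n where "\<bar>blinfun_apply f ((s \<circ> r) n) - blinfun_apply f x\<bar> < \<delta>"
    using frequently_ex[OF weak_cluster_pointD[OF w \<open>\<delta> > 0\<close>]] by blast
  then show False using spec[OF far, of n] by (simp add: dist_real_def)
qed

text \<open>The closed span \<open>Z\<close> of the sequence is separable, so a sequence \<open>\<phi>\<close> of functionals
  separates its points. After passing to a subsequence on which every \<open>\<phi> j\<close> converges, all weak
  cluster points of further subsequences lie in \<open>Z\<close> and agree on every \<open>\<phi> j\<close>, so they coincide.\<close>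
lemma reflexive_bounded_seq_has_weakly_convergent_subseq:
  fixes s :: "nat \<Rightarrow> 'a::real_normed_vector"
  assumes refl: "reflexive_space TYPE('a)" and bounded: "\<And>n. norm (s n) \<le> 1"
  obtains r :: "nat \<Rightarrow> nat" and x where "strict_mono r" and "weakly_tendsto (s \<circ> r) x"
proof -
  define Z where "Z = closure (rat_span s)"
  have "closed Z" and "subspace Z" unfolding Z_def by (simp_all add: subspace_closure_rat_span)
  have sZ: "s n \<in> Z" for n unfolding Z_def using rat_span_base closure_subset by blast
  obtain \<phi> :: "nat \<Rightarrow> 'a \<Rightarrow>\<^sub>L real" where \<phi>1: "\<And>j. norm (\<phi> j) \<le> 1"
    and norming: "\<And>z. z \<in> Z \<Longrightarrow> (\<And>j. blinfun_apply (\<phi> j) z = 0) \<Longrightarrow> z = 0"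
    using countable_dense_norming_sequence[OF countable_rat_span[of s]] unfolding Z_def by blast
  obtain r :: "nat \<Rightarrow> nat" and l
    where r: "strict_mono r" and lim: "\<forall>j. (\<lambda>k. blinfun_apply (\<phi> j) (s (r k))) \<longlonglongrightarrow> l j"
    using bounded_seq_has_subseq_converging_on_functionals[of s \<phi>, OF bounded \<phi>1] by blast
  have bounded_subseq: "norm ((s \<circ> r) n) \<le> 1" for n
    using bounded by simp
  have cluster: "w \<in> Z \<and> (\<forall>j. blinfun_apply (\<phi> j) w = l j)"
    if "strict_mono r'" and "weak_cluster_point (s \<circ> r \<circ> r') w" for r' w
  proof
    show "w \<in> Z"
      using weak_cluster_point_in_closed_subspace[OF \<open>closed Z\<close> \<open>subspace Z\<close> _ that(2)] sZ by simp
    show "\<forall>j. blinfun_apply (\<phi> j) w = l j"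
      using weak_cluster_point_apply_eq_lim[OF that(2)] LIMSEQ_subseq_LIMSEQ[OF lim[rule_format] that(1)]
      by (simp add: comp_def)
  qed
  obtain x where "weak_cluster_point (s \<circ> r) x"
    using reflexive_bounded_seq_has_weak_cluster_point[of "s \<circ> r", OF refl bounded_subseq] by blast
  then have x: "weak_cluster_point (s \<circ> r \<circ> id) x" by simp
  have "weakly_tendsto (s \<circ> r) x"
  proof (rule weakly_tendsto_if_subseq_weak_cluster_points_eq[OF refl bounded_subseq])
    fix r' w assume "strict_mono r'" "weak_cluster_point (s \<circ> r \<circ> r') w"
    then have "w - x = 0"
      using cluster[OF strict_mono_id x] \<open>subspace Z\<close>
      by (intro norming) (auto simp: subspace_diff blinfun.diff_right dest: cluster)
    then show "w = x" by simp
  qed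
  with r show ?thesis by (rule that)
qed

section \<open>Compact operators on reflexive Kadets-Klee spaces\<close>

lemma compact_operator_weakly_tendsto_imp_tendsto:
  fixes T :: "'a::real_normed_vector \<Rightarrow>\<^sub>L 'b::real_normed_vector"
  assumes "compact_operator T" and bounded: "\<And>n. norm (s n) \<le> 1" and "weakly_tendsto s x"
  shows "(\<lambda>n. blinfun_apply T (s n)) \<longlonglongrightarrow> blinfun_apply T x"
proof (rule ccontr)
  assume "\<not> ?thesis"
  then obtain \<delta> and r :: "nat \<Rightarrow> nat" where "\<delta> > 0" "strict_mono r"
    and far: "\<forall>k. \<delta> \<le> dist (blinfun_apply T (s (r k))) (blinfun_apply T x)"
    using not_tendsto_imp_subseq_bounded_away by blast
  have "seq_compact (closure (blinfun_apply T ` cball 0 1))"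
    using assms(1) unfolding compact_operator_def by (rule compact_imp_seq_compact)
  moreover have "\<forall>k. (\<lambda>k. blinfun_apply T (s (r k))) k \<in> closure (blinfun_apply T ` cball 0 1)"
    using bounded closure_subset by fastforce
  ultimately obtain y and r' :: "nat \<Rightarrow> nat" where "strict_mono r'"
    and "((\<lambda>k. blinfun_apply T (s (r k))) \<circ> r') \<longlonglongrightarrow> y"
    by (metis seq_compactE)
  then have lim: "(\<lambda>k. blinfun_apply T (s (r (r' k)))) \<longlonglongrightarrow> y" by (simp add: comp_def)
  \<comment> \<open>the norm limit \<open>y\<close> is also the weak limit of the subsequence, hence \<open>T x\<close>\<close>
  have "blinfun_apply g y = blinfun_apply g (blinfun_apply T x)" for g :: "'b \<Rightarrow>\<^sub>L real"
  proof (rule LIMSEQ_unique)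
    show "(\<lambda>k. blinfun_apply g (blinfun_apply T (s (r (r' k))))) \<longlonglongrightarrow> blinfun_apply g y"
      using lim by (rule blinfun.tendsto[OF tendsto_const])
    have "weakly_tendsto (s \<circ> (r \<circ> r')) x"
      using assms(3) \<open>strict_mono r\<close> \<open>strict_mono r'\<close> by (intro weakly_tendsto_subseq strict_mono_o)
    then have "(\<lambda>k. blinfun_apply (g o\<^sub>L T) ((s \<circ> (r \<circ> r')) k)) \<longlonglongrightarrow> blinfun_apply (g o\<^sub>L T) x"
      unfolding weakly_tendsto_def by blast
    then show "(\<lambda>k. blinfun_apply g (blinfun_apply T (s (r (r' k))))) \<longlonglongrightarrow> blinfun_apply g (blinfun_apply T x)"
      by simp
  qed
  then have "y = blinfun_apply T x"
    using eq_0_if_blinfun_apply_eq_0[of "y - blinfun_apply T x"] by (simp add: blinfun.diff_right)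
  with lim have "\<forall>\<^sub>F k in sequentially. dist (blinfun_apply T (s (r (r' k)))) (blinfun_apply T x) < \<delta>"
    using \<open>\<delta> > 0\<close> by (simp add: tendstoD)
  then obtain k where "dist (blinfun_apply T (s (r (r' k)))) (blinfun_apply T x) < \<delta>"
    by (auto simp: eventually_sequentially)
  then show False using spec[OF far, of "r' k"] by simp
qed

lemma weakly_tendsto_norm_le:
  assumes "weakly_tendsto s x" and "\<And>n. norm (s n) \<le> 1"
  shows "norm x \<le> 1"
proof -
  obtain f where "norm f \<le> 1" and fx: "blinfun_apply f x = norm x"
    by (rule exists_norming_functional)
  have "blinfun_apply f (s n) \<le> 1" for n
    using norm_blinfun[of f "s n"] mult_mono[OF \<open>norm f \<le> 1\<close> assms(2)[of n]] by simp
  moreover have "(\<lambda>n. blinfun_apply f (s n)) \<longlonglongrightarrow> norm x"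
    using assms(1) fx unfolding weakly_tendsto_def by metis
  ultimately show ?thesis by (intro LIMSEQ_le_const2) auto
qed

lemma compact_operator_almost_norming_seq_converges:
  fixes T :: "'a::real_normed_vector \<Rightarrow>\<^sub>L 'b::real_normed_vector"
  assumes refl: "reflexive_space TYPE('a)" and kk: "kadets_klee TYPE('a)"
    and "compact_operator T" and "norm T \<le> 1"
    and unit: "\<And>n. norm (s n) = 1" and almost: "(\<lambda>n. norm (blinfun_apply T (s n))) \<longlonglongrightarrow> 1"
  shows "\<exists>r x. strict_mono r \<and> norm x = 1 \<and> norm (blinfun_apply T x) = 1
           \<and> (\<lambda>n. norm (s (r n) - x)) \<longlonglongrightarrow> 0"
proof -
  have bounded: "norm (s n) \<le> 1" for n using unit by simp
  obtain r :: "nat \<Rightarrow> nat" and x where r: "strict_mono r" and weak: "weakly_tendsto (s \<circ> r) x"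
    by (rule reflexive_bounded_seq_has_weakly_convergent_subseq[of s, OF refl bounded])
  have "(\<lambda>n. blinfun_apply T ((s \<circ> r) n)) \<longlonglongrightarrow> blinfun_apply T x"
    using bounded by (intro compact_operator_weakly_tendsto_imp_tendsto[OF assms(3) _ weak]) simp
  then have "(\<lambda>n. norm (blinfun_apply T (s (r n)))) \<longlonglongrightarrow> norm (blinfun_apply T x)"
    by (simp add: tendsto_norm comp_def)
  moreover have "(\<lambda>n. norm (blinfun_apply T (s (r n)))) \<longlonglongrightarrow> 1"
    using LIMSEQ_subseq_LIMSEQ[OF almost r] by (simp add: comp_def)
  ultimately have Tx: "norm (blinfun_apply T x) = 1" by (rule LIMSEQ_unique)
  have "norm x \<le> 1" using weakly_tendsto_norm_le[OF weak] bounded by simp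
  moreover have "norm (blinfun_apply T x) \<le> norm x"
    using norm_blinfun[of T x] mult_right_mono[OF assms(4) norm_ge_zero[of x]] by simp
  ultimately have x: "norm x = 1" using Tx by simp
  have "(\<lambda>n. norm ((s \<circ> r) n)) \<longlonglongrightarrow> norm x" using unit x by simp
  with kk weak have "(\<lambda>n. norm ((s \<circ> r) n - x)) \<longlonglongrightarrow> 0"
    unfolding kadets_klee_def by blast
  with r x Tx show ?thesis by (auto simp: comp_def)
qed

lemma tendsto_1_if_gt_1_minus_inverse:
  fixes a :: "nat \<Rightarrow> real"
  assumes "\<And>n. 1 - inverse (Suc n) < a n" and "\<And>n. a n \<le> 1"
  shows "a \<longlonglongrightarrow> 1"
proof (rule real_tendsto_sandwich[OF _ _ LIMSEQ_inverse_real_of_nat_add_minus tendsto_const])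
  show "\<forall>\<^sub>F n in sequentially. 1 + - inverse (real (Suc n)) \<le> a n"
    using assms(1) less_imp_le by (intro always_eventually) (simp, blast)
  show "\<forall>\<^sub>F n in sequentially. a n \<le> 1"
    using assms(2) by simp
qed

lemma compact_operator_norm_attaining_near_almost_norming:
  fixes T :: "'a::real_normed_vector \<Rightarrow>\<^sub>L 'b::real_normed_vector"
  assumes refl: "reflexive_space TYPE('a)" and kk: "kadets_klee TYPE('a)"
    and T: "compact_operator T" "norm T = 1" and "\<epsilon> > 0"
  shows "\<exists>\<eta>>0. \<forall>x0. norm x0 = 1 \<and> norm (blinfun_apply T x0) > 1 - \<eta> \<longrightarrow>
           (\<exists>x1. norm x1 = 1 \<and> norm (blinfun_apply T x1) = 1 \<and> norm (x1 - x0) < \<epsilon>)"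
proof (rule ccontr)
  assume "\<not> ?thesis"
  then have "\<forall>n. \<exists>x0. norm x0 = 1 \<and> norm (blinfun_apply T x0) > 1 - inverse (Suc n) \<and>
      (\<forall>x1. norm x1 = 1 \<and> norm (blinfun_apply T x1) = 1 \<longrightarrow> \<epsilon> \<le> norm (x1 - x0))"
    by (metis inverse_positive_iff_positive not_less of_nat_0_less_iff zero_less_Suc)
  then obtain s where unit: "\<And>n. norm (s n) = 1"
    and almost: "\<And>n. norm (blinfun_apply T (s n)) > 1 - inverse (Suc n)"
    and far: "\<And>n x1. norm x1 = 1 \<Longrightarrow> norm (blinfun_apply T x1) = 1 \<Longrightarrow> \<epsilon> \<le> norm (x1 - s n)"
    by metis
  have "norm (blinfun_apply T (s n)) \<le> 1" for n
    using norm_blinfun[of T "s n"] unit[of n] T by simp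
  with almost have "(\<lambda>n. norm (blinfun_apply T (s n))) \<longlonglongrightarrow> 1"
    by (rule tendsto_1_if_gt_1_minus_inverse)
  then obtain r :: "nat \<Rightarrow> nat" and x
    where x: "norm x = 1" "norm (blinfun_apply T x) = 1" and lim: "(\<lambda>n. norm (s (r n) - x)) \<longlonglongrightarrow> 0"
    using compact_operator_almost_norming_seq_converges[of T s, OF refl kk] T unit by auto
  have "\<forall>\<^sub>F n in sequentially. norm (s (r n) - x) < \<epsilon>"
    using order_tendstoD(2)[OF lim \<open>\<epsilon> > 0\<close>] .
  then obtain n where "norm (s (r n) - x) < \<epsilon>" by (auto simp: eventually_sequentially)
  then show False using far[OF x, of "r n"] by (simp add: norm_minus_commute)
qed

theorem theorem2p12:
  assumes "reflexive_space TYPE('a::banach)"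
    and "kadets_klee TYPE('a)"
    and "dim_gt_one TYPE('a)"
    and "dim_gt_one TYPE('b::banach)"
  shows "sBPBp_compact TYPE('a) TYPE('b)"
  unfolding sBPBp_compact_def
  using compact_operator_norm_attaining_near_almost_norming[OF assms(1,2)] by blast

end
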